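(* Let $K$ be an infinite commutative domain and $R$ an associative $K$-algebra on which $K$ acts torsion-freely. Let $m,k,n\ge0$, $\alpha_0,\dots,\alpha_n\in K$, $\alpha=\sum_{i=0}^n\alpha_iy^ixy^{n-i}$, and suppose $y^m\alpha y^k=0$ for all $x,y\in R$. (i) If $\alpha_n\neq0$ then $y^{m+n}e_ny^k=0$ for all $x,y\in R$. (ii) If $\alpha_0\ne0$ then $y^me_ny^{n+k}=0$ for all $x,y\in R$. (iii) If $\alpha_0\neq0$ and $\alpha_n\neq0$ then $y^me_{3n-1}y^k=0$ for all $x,y\in R$.
   Context: $[a,b]=ab-ba$, $e_1=[x,y]$, $e_{j+1}=[e_j,y]$, and $e_0=x$. *)

theory Defs
  imports Main "HOL.Modules"
begin

text \<open>R is a possibly non-unital associative ring (class ring); powers y^i acting on the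
left/right are written as iterated multiplications so that y^0 z = z makes sense.\<close>

definition lpow :: "'r::ring \<Rightarrow> nat \<Rightarrow> 'r \<Rightarrow> 'r" where
  "lpow y i z = (((*) y) ^^ i) z"

definition rpow :: "'r::ring \<Rightarrow> 'r \<Rightarrow> nat \<Rightarrow> 'r" where
  "rpow z y j = ((\<lambda>w. w * y) ^^ j) z"

definition comm :: "'r::ring \<Rightarrow> 'r \<Rightarrow> 'r" where
  "comm a b = a * b - b * a"

fun eseq :: "'r::ring \<Rightarrow> 'r \<Rightarrow> nat \<Rightarrow> 'r" where
  "eseq x y 0 = x"
| "eseq x y (Suc j) = comm (eseq x y j) y"

definition algebra_over :: "('k::comm_ring_1 \<Rightarrow> 'r::ring \<Rightarrow> 'r) \<Rightarrow> bool" where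
  "algebra_over sc \<longleftrightarrow> module sc \<and>
     (\<forall>c a b. sc c (a * b) = sc c a * b \<and> sc c (a * b) = a * sc c b)"

definition torsion_free :: "('k::comm_ring_1 \<Rightarrow> 'r::ring \<Rightarrow> 'r) \<Rightarrow> bool" where
  "torsion_free sc \<longleftrightarrow> (\<forall>c r. sc c r = 0 \<longrightarrow> c = 0 \<or> r = 0)"

end

theory Submission
  imports Defs "HOL-Computational_Algebra.Polynomial"
begin

(* Write L and R for left and right multiplication by y.  They commute, alpha = p(L, R) x
   with p = sum a_i L^i R^(n-i), and e_n = (R - L)^n x.  Substituting y - t y^2 for y turns
   the hypothesis into a polynomial identity in the scalar t; as K is infinite and acts
   torsion-freely, its coefficients vanish, and cancelling the outer factors y - t y^2 one
   at a time gives y^m A_j y^k = 0 for every coefficient A_j of alpha(x, y - t y^2).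
   Evaluating this t-polynomial at t = y^-1 acting on the right, i.e. forming
   sum_j A_j y^(n-j), kills every term with i < n and leaves a_n y^n e_n; acting on the
   left it leaves (-1)^n a_0 e_n y^n.  Finally e_(3n-1) = e_(2n-1)(e_n), and every
   monomial y^r e_n y^(2n-1-r) of e_(2n-1)(e_n) has r >= n or 2n-1-r >= n. *)

lemma lpow_0 [simp]: "lpow y 0 w = w"
  by (simp add: lpow_def)

lemma lpow_Suc: "lpow y (Suc i) w = y * lpow y i w"
  by (simp add: lpow_def)

lemma rpow_0 [simp]: "rpow w y 0 = w"
  by (simp add: rpow_def)

lemma rpow_Suc: "rpow w y (Suc j) = rpow w y j * y"
  by (simp add: rpow_def)

lemma lpow_Suc': "lpow y (Suc i) w = lpow y i (y * w)"
  by (induct i) (simp_all add: lpow_Suc)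

lemma rpow_Suc': "rpow w y (Suc j) = rpow (w * y) y j"
  by (induct j) (simp_all add: rpow_Suc)

lemma lpow_commute: "lpow y i (y * w) = y * lpow y i w"
  by (simp add: lpow_Suc' [symmetric] lpow_Suc)

lemma rpow_commute: "rpow (w * y) y j = rpow w y j * y"
  by (simp add: rpow_Suc' [symmetric] rpow_Suc)

lemma lpow_lpow: "lpow y i (lpow y j w) = lpow y (i + j) w"
  by (induct i) (simp_all add: lpow_Suc)

lemma rpow_rpow: "rpow (rpow w y i) y j = rpow w y (i + j)"
  by (induct j) (simp_all add: rpow_Suc)

lemma lpow_mult: "lpow y i (u * v) = lpow y i u * v"
  by (induct i) (simp_all add: lpow_Suc mult.assoc)

lemma rpow_mult: "rpow (u * v) y j = u * rpow v y j"
  by (induct j) (simp_all add: rpow_Suc mult.assoc)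

lemma lpow_rpow: "lpow y i (rpow w y j) = rpow (lpow y i w) y j"
  by (induct j) (simp_all add: rpow_Suc lpow_mult)

lemma lpow_rpow_add:
  "lpow y (m + i) (rpow w y (k + j)) = lpow y i (rpow (lpow y m (rpow w y k)) y j)"
  by (simp add: lpow_rpow lpow_lpow rpow_rpow add.commute)

lemma lpow_diff: "lpow y i (u - v) = lpow y i u - lpow y i v"
  by (induct i) (simp_all add: lpow_Suc right_diff_distrib)

lemma rpow_diff: "rpow (u - v) y j = rpow u y j - rpow v y j"
  by (induct j) (simp_all add: rpow_Suc left_diff_distrib)

lemma lpow_zero [simp]: "lpow y i 0 = 0"
  using lpow_diff [of y i 0 0] by simp

lemma rpow_zero [simp]: "rpow 0 y j = 0"
  using rpow_diff [of 0 0 y j] by simp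

lemma lpow_add: "lpow y i (u + v) = lpow y i u + lpow y i v"
  using lpow_diff [of y i "u + v" v] by (simp add: algebra_simps)

lemma rpow_add: "rpow (u + v) y j = rpow u y j + rpow v y j"
  using rpow_diff [of "u + v" v y j] by (simp add: algebra_simps)

lemma lpow_sum: "lpow y i (\<Sum>a\<in>A. f a) = (\<Sum>a\<in>A. lpow y i (f a))"
  by (induct A rule: infinite_finite_induct) (simp_all add: lpow_add)

lemma rpow_sum: "rpow (\<Sum>a\<in>A. f a) y j = (\<Sum>a\<in>A. rpow (f a) y j)"
  by (induct A rule: infinite_finite_induct) (simp_all add: rpow_add)

lemma eseq_eseq: "eseq (eseq x y i) y j = eseq x y (i + j)"
  by (induct j) simp_all

lemma eseq_zero [simp]: "eseq 0 y j = 0"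
  by (induct j) (simp_all add: comm_def)

lemma comm_lpow: "comm (lpow y i w) y = lpow y i (comm w y)"
  by (induct i) (simp_all add: comm_def lpow_Suc lpow_diff lpow_mult algebra_simps)

lemma comm_rpow_uminus: "comm y (rpow w y i) * y = rpow (comm w (- y)) y (Suc i)"
  by (simp add: comm_def rpow_diff rpow_mult [of y] rpow_commute rpow_Suc algebra_simps)

lemma eseq_vanishing:
  assumes "\<And>a b. N \<le> a + b \<Longrightarrow> lpow y (m + a) (rpow w y (k + b)) = 0"
    and "N \<le> a + b + j"
  shows "lpow y (m + a) (rpow (eseq w y j) y (k + b)) = 0"
  using assms(2)
proof (induction j arbitrary: a b)
  case 0
  then show ?case using assms(1) by simp
next
  case (Suc j)
  have "lpow y (m + a) (rpow (eseq w y (Suc j)) y (k + b))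
      = lpow y (m + a) (rpow (eseq w y j) y (k + Suc b))
        - lpow y (m + Suc a) (rpow (eseq w y j) y (k + b))"
    by (simp add: comm_def rpow_diff lpow_diff rpow_mult [of y] rpow_commute lpow_commute
        rpow_Suc [symmetric] lpow_Suc [symmetric])
  then show ?case
    using Suc.IH [of a "Suc b"] Suc.IH [of "Suc a" b] Suc.prems by simp
qed

lemma eseq_vanishing_from_ends:
  assumes "lpow y (m + n) (rpow w y k) = 0"
    and "lpow y m (rpow w y (n + k)) = 0"
  shows "lpow y m (rpow (eseq w y (2 * n - 1)) y k) = 0"
proof -
  have "lpow y (m + a) (rpow w y (k + b)) = 0" if "2 * n - 1 \<le> a + b" for a b
  proof (cases "n \<le> a")
    case True
    then have "lpow y (m + a) (rpow w y (k + b))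
        = lpow y (a - n) (rpow (lpow y (m + n) (rpow w y k)) y b)"
      using lpow_rpow_add [of y "m + n" "a - n" w k b] by simp
    then show ?thesis using assms(1) by simp
  next
    case False
    then have "n \<le> b" using that by linarith
    then have "lpow y (m + a) (rpow w y (k + b))
        = lpow y a (rpow (lpow y m (rpow w y (n + k))) y (b - n))"
      using lpow_rpow_add [of y m a w "n + k" "b - n"] by (simp add: add.commute)
    then show ?thesis using assms(2) by simp
  qed
  from eseq_vanishing [where a = 0 and b = 0 and j = "2 * n - 1", OF this] show ?thesis
    by simp
qed

section \<open>Polynomials over R in a scalar parameter\<close>

(* A polynomial q over R in the scalar t stands for sum_j t^j q_j (made precise by
   poly_sc below); zmult_left y and zmult_right y multiply it by y - t y^2. *)
definition zmult_left :: "'r::ring \<Rightarrow> 'r poly \<Rightarrow> 'r poly" where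
  "zmult_left y q = map_poly ((*) y) q - pCons 0 (map_poly ((*) (y * y)) q)"

definition zmult_right :: "'r::ring \<Rightarrow> 'r poly \<Rightarrow> 'r poly" where
  "zmult_right y q = map_poly (\<lambda>w. w * y) q - pCons 0 (map_poly (\<lambda>w. w * (y * y)) q)"

lemma coeff_zmult_left_0: "coeff (zmult_left y q) 0 = y * coeff q 0"
  by (simp add: zmult_left_def coeff_map_poly)

lemma coeff_zmult_left_Suc:
  "coeff (zmult_left y q) (Suc j) = y * coeff q (Suc j) - y * (y * coeff q j)"
  by (simp add: zmult_left_def coeff_map_poly mult.assoc)

lemma coeff_zmult_right_0: "coeff (zmult_right y q) 0 = coeff q 0 * y"
  by (simp add: zmult_right_def coeff_map_poly)

lemma coeff_zmult_right_Suc: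
  "coeff (zmult_right y q) (Suc j) = coeff q (Suc j) * y - coeff q j * y * y"
  by (simp add: zmult_right_def coeff_map_poly mult.assoc)

lemma degree_zmult_left_le: "degree (zmult_left y q) \<le> Suc (degree q)"
  using degree_pCons_le [of 0 "map_poly ((*) (y * y)) q"]
    map_poly_degree_leq [of "(*) y" q] map_poly_degree_leq [of "(*) (y * y)" q]
  unfolding zmult_left_def by (intro degree_diff_le) linarith+

lemma degree_zmult_right_le: "degree (zmult_right y q) \<le> Suc (degree q)"
  using degree_pCons_le [of 0 "map_poly (\<lambda>w. w * (y * y)) q"]
    map_poly_degree_leq [of "\<lambda>w. w * y" q] map_poly_degree_leq [of "\<lambda>w. w * (y * y)" q]
  unfolding zmult_right_def by (intro degree_diff_le) linarith+

lemma degree_zmult_left_iter_le: "degree ((zmult_left y ^^ i) q) \<le> i + degree q"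
  by (induct i) (auto intro: order.trans [OF degree_zmult_left_le])

lemma degree_zmult_right_iter_le: "degree ((zmult_right y ^^ i) q) \<le> i + degree q"
  by (induct i) (auto intro: order.trans [OF degree_zmult_right_le])

lemma zmult_left_peel:
  assumes "additive \<phi>" and "\<And>u. \<phi> (y * u) = y * \<phi> u"
    and "\<And>j. \<phi> (coeff (zmult_left y q) j) = 0"
  shows "\<phi> (y * coeff q j) = 0"
proof (induct j)
  case 0
  then show ?case using assms(3) [of 0] by (simp add: coeff_zmult_left_0)
next
  case (Suc j)
  then show ?case
    using assms(3) [of "Suc j"]
    by (simp add: coeff_zmult_left_Suc additive.diff [OF assms(1)] assms(2))
qed

lemma zmult_right_peel:
  assumes "additive \<psi>" and "\<And>u. \<psi> (u * y) = \<psi> u * y"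
    and "\<And>j. \<psi> (coeff (zmult_right y q) j) = 0"
  shows "\<psi> (coeff q j * y) = 0"
proof (induct j)
  case 0
  then show ?case using assms(3) [of 0] by (simp add: coeff_zmult_right_0)
next
  case (Suc j)
  then show ?case
    using assms(3) [of "Suc j"]
    by (simp add: coeff_zmult_right_Suc additive.diff [OF assms(1)] assms(2))
qed

lemma zmult_left_iter_peel:
  assumes "additive \<phi>" and "\<And>u. \<phi> (y * u) = y * \<phi> u"
    and "\<And>j. \<phi> (coeff ((zmult_left y ^^ b) q) j) = 0"
  shows "\<phi> (lpow y b (coeff q j)) = 0"
  using assms
proof (induct b arbitrary: \<phi>)
  case 0
  then show ?case by simp
next
  case (Suc b)
  have "additive (\<lambda>u. \<phi> (y * u))"
    by unfold_locales (simp add: distrib_left additive.add [OF Suc.prems(1)])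
  moreover have "\<phi> (y * coeff ((zmult_left y ^^ b) q) j) = 0" for j
    by (rule zmult_left_peel [where \<phi> = \<phi>]) (use Suc.prems in simp_all)
  ultimately have "\<phi> (y * lpow y b (coeff q j)) = 0"
    using Suc.hyps [of "\<lambda>u. \<phi> (y * u)"] Suc.prems(2) by blast
  then show ?case by (simp add: lpow_Suc)
qed

lemma zmult_right_iter_peel:
  assumes "additive \<psi>" and "\<And>u. \<psi> (u * y) = \<psi> u * y"
    and "\<And>j. \<psi> (coeff ((zmult_right y ^^ b) q) j) = 0"
  shows "\<psi> (rpow (coeff q j) y b) = 0"
  using assms
proof (induct b arbitrary: \<psi>)
  case 0
  then show ?case by simp
next
  case (Suc b)
  have "additive (\<lambda>u. \<psi> (u * y))"
    by unfold_locales (simp add: distrib_right additive.add [OF Suc.prems(1)])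
  moreover have "\<psi> (coeff ((zmult_right y ^^ b) q) j * y) = 0" for j
    by (rule zmult_right_peel [where \<psi> = \<psi>]) (use Suc.prems in simp_all)
  ultimately have "\<psi> (rpow (coeff q j) y b * y) = 0"
    using Suc.hyps [of "\<lambda>u. \<psi> (u * y)"] Suc.prems(2) by (metis mult.assoc)
  then show ?case by (simp add: rpow_Suc)
qed

section \<open>Evaluation at the inverse of y\<close>

lemma lpow_mult_commuting: "u * y = y * u \<Longrightarrow> lpow y i (u * w) = u * lpow y i w"
  by (induct i) (simp_all add: lpow_Suc mult.assoc [symmetric])

lemma rpow_mult_commuting: "u * y = y * u \<Longrightarrow> rpow (w * u) y j = rpow w y j * u"
  by (induct j) (simp_all add: rpow_Suc mult.assoc)

(* Morally (sum_j q_j y^-j) y^N: the t-polynomial q evaluated at t = y^-1 acting on the right. *)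
definition reflect_eval_right :: "'r::ring \<Rightarrow> nat \<Rightarrow> 'r poly \<Rightarrow> 'r" where
  "reflect_eval_right y N q = (\<Sum>j\<le>N. rpow (coeff q j) y (N - j))"

definition reflect_eval_left :: "'r::ring \<Rightarrow> nat \<Rightarrow> 'r poly \<Rightarrow> 'r" where
  "reflect_eval_left y N q = (\<Sum>j\<le>N. lpow y (N - j) (coeff q j))"

lemma reflect_eval_right_diff:
  "reflect_eval_right y N (p - q) = reflect_eval_right y N p - reflect_eval_right y N q"
  by (simp add: reflect_eval_right_def rpow_diff sum_subtractf)

lemma reflect_eval_left_diff:
  "reflect_eval_left y N (p - q) = reflect_eval_left y N p - reflect_eval_left y N q"
  by (simp add: reflect_eval_left_def lpow_diff sum_subtractf)

lemma reflect_eval_right_sum: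
  "reflect_eval_right y N (\<Sum>i\<in>A. P i) = (\<Sum>i\<in>A. reflect_eval_right y N (P i))"
  unfolding reflect_eval_right_def coeff_sum rpow_sum by (rule sum.swap)

lemma reflect_eval_left_sum:
  "reflect_eval_left y N (\<Sum>i\<in>A. P i) = (\<Sum>i\<in>A. reflect_eval_left y N (P i))"
  unfolding reflect_eval_left_def coeff_sum lpow_sum by (rule sum.swap)

lemma reflect_eval_right_map_left:
  "reflect_eval_right y N (map_poly ((*) u) q) = u * reflect_eval_right y N q"
  by (simp add: reflect_eval_right_def coeff_map_poly rpow_mult sum_distrib_left)

lemma reflect_eval_left_map_right:
  "reflect_eval_left y N (map_poly (\<lambda>w. w * u) q) = reflect_eval_left y N q * u"
  by (simp add: reflect_eval_left_def coeff_map_poly lpow_mult sum_distrib_right)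

lemma reflect_eval_right_map_right:
  "u * y = y * u \<Longrightarrow> reflect_eval_right y N (map_poly (\<lambda>w. w * u) q) = reflect_eval_right y N q * u"
  by (simp add: reflect_eval_right_def coeff_map_poly rpow_mult_commuting sum_distrib_right)

lemma reflect_eval_left_map_left:
  "u * y = y * u \<Longrightarrow> reflect_eval_left y N (map_poly ((*) u) q) = u * reflect_eval_left y N q"
  by (simp add: reflect_eval_left_def coeff_map_poly lpow_mult_commuting sum_distrib_left)

lemma reflect_eval_right_pCons_0:
  "reflect_eval_right y (Suc N) (pCons 0 q) = reflect_eval_right y N q"
  unfolding reflect_eval_right_def sum.atMost_Suc_shift by simp

lemma reflect_eval_left_pCons_0:
  "reflect_eval_left y (Suc N) (pCons 0 q) = reflect_eval_left y N q"
  unfolding reflect_eval_left_def sum.atMost_Suc_shift by simp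

lemma reflect_eval_right_Suc:
  "degree q \<le> N \<Longrightarrow> reflect_eval_right y (Suc N) q = reflect_eval_right y N q * y"
  by (simp add: reflect_eval_right_def coeff_eq_0 sum_distrib_right Suc_diff_le rpow_Suc)

lemma reflect_eval_left_Suc:
  "degree q \<le> N \<Longrightarrow> reflect_eval_left y (Suc N) q = y * reflect_eval_left y N q"
  by (simp add: reflect_eval_left_def coeff_eq_0 sum_distrib_left Suc_diff_le lpow_Suc)

lemma reflect_eval_right_zmult_left:
  assumes "degree q \<le> N"
  shows "reflect_eval_right y (Suc N) (zmult_left y q) = y * comm (reflect_eval_right y N q) y"
  using assms
  by (simp add: zmult_left_def reflect_eval_right_diff reflect_eval_right_map_left
      reflect_eval_right_pCons_0 reflect_eval_right_Suc comm_def algebra_simps)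

lemma reflect_eval_left_zmult_left:
  assumes "degree q \<le> N"
  shows "reflect_eval_left y (Suc N) (zmult_left y q) = 0"
  using assms
  by (simp add: zmult_left_def reflect_eval_left_diff reflect_eval_left_map_left
      reflect_eval_left_pCons_0 reflect_eval_left_Suc mult.assoc)

lemma reflect_eval_right_zmult_right:
  assumes "degree q \<le> N"
  shows "reflect_eval_right y (Suc N) (zmult_right y q) = 0"
  using assms
  by (simp add: zmult_right_def reflect_eval_right_diff reflect_eval_right_map_right
      reflect_eval_right_pCons_0 reflect_eval_right_Suc mult.assoc)

lemma reflect_eval_left_zmult_right:
  assumes "degree q \<le> N"
  shows "reflect_eval_left y (Suc N) (zmult_right y q) = comm y (reflect_eval_left y N q) * y"
  using assms
  by (simp add: zmult_right_def reflect_eval_left_diff reflect_eval_left_map_right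
      reflect_eval_left_pCons_0 reflect_eval_left_Suc comm_def algebra_simps)

lemma reflect_eval_right_zmult_left_iter:
  assumes "degree q \<le> N"
  shows "reflect_eval_right y (i + N) ((zmult_left y ^^ i) q)
    = lpow y i (eseq (reflect_eval_right y N q) y i)"
proof (induct i)
  case 0
  then show ?case by simp
next
  case (Suc i)
  have "degree ((zmult_left y ^^ i) q) \<le> i + N"
    using degree_zmult_left_iter_le [where y = y and i = i and q = q] assms by linarith
  then show ?case
    using Suc by (simp add: reflect_eval_right_zmult_left comm_lpow lpow_Suc)
qed

lemma reflect_eval_left_zmult_right_iter:
  assumes "degree q \<le> N"
  shows "reflect_eval_left y (i + N) ((zmult_right y ^^ i) q)
    = rpow (eseq (reflect_eval_left y N q) (- y) i) y i"
proof (induct i)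
  case 0
  then show ?case by simp
next
  case (Suc i)
  have "degree ((zmult_right y ^^ i) q) \<le> i + N"
    using degree_zmult_right_iter_le [where y = y and i = i and q = q] assms by linarith
  then show ?case
    using Suc by (simp add: reflect_eval_left_zmult_right comm_rpow_uminus)
qed

lemma reflect_eval_right_vanishing:
  assumes "\<And>j. lpow y m (rpow (coeff q j) y k) = 0"
  shows "lpow y m (rpow (reflect_eval_right y N q) y k) = 0"
proof -
  have "lpow y m (rpow (reflect_eval_right y N q) y k)
      = (\<Sum>j\<le>N. rpow (lpow y m (rpow (coeff q j) y k)) y (N - j))"
    by (simp add: reflect_eval_right_def rpow_sum lpow_sum lpow_rpow rpow_rpow add.commute)
  then show ?thesis by (simp add: assms)
qed

lemma reflect_eval_left_vanishing:
  assumes "\<And>j. lpow y m (rpow (coeff q j) y k) = 0"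
  shows "lpow y m (rpow (reflect_eval_left y N q) y k) = 0"
proof -
  have "lpow y m (rpow (reflect_eval_left y N q) y k)
      = (\<Sum>j\<le>N. lpow y (N - j) (lpow y m (rpow (coeff q j) y k)))"
    by (simp add: reflect_eval_left_def rpow_sum lpow_sum lpow_rpow lpow_lpow add.commute)
  then show ?thesis by (simp add: assms)
qed

locale scalar_algebra =
  fixes sc :: "'k::comm_ring_1 \<Rightarrow> 'r::ring \<Rightarrow> 'r"
  assumes algebra_over: "algebra_over sc"
begin

sublocale module sc
  using algebra_over unfolding algebra_over_def by blast

lemma scale_mult_left: "sc c (u * v) = sc c u * v"
  using algebra_over unfolding algebra_over_def by blast

lemma scale_mult_right: "sc c (u * v) = u * sc c v"
  using algebra_over unfolding algebra_over_def by blast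

lemma lpow_scale: "lpow y i (sc c w) = sc c (lpow y i w)"
  by (induct i) (simp_all add: lpow_Suc scale_mult_right)

lemma rpow_scale: "rpow (sc c w) y j = sc c (rpow w y j)"
  by (induct j) (simp_all add: rpow_Suc scale_mult_left)

lemma eseq_uminus: "eseq x (- y) n = sc ((- 1) ^ n) (eseq x y n)"
  by (induct n)
    (simp_all add: comm_def scale_mult_left [symmetric] scale_mult_right [symmetric]
      scale_right_diff_distrib)

definition poly_sc :: "'r poly \<Rightarrow> 'k \<Rightarrow> 'r" where
  "poly_sc p t = (\<Sum>j\<le>degree p. sc (t ^ j) (coeff p j))"

lemma poly_sc_eq_sum: "degree p \<le> N \<Longrightarrow> poly_sc p t = (\<Sum>j\<le>N. sc (t ^ j) (coeff p j))"
  unfolding poly_sc_def by (rule sum.mono_neutral_left) (auto simp: coeff_eq_0)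

lemma poly_sc_0 [simp]: "poly_sc 0 t = 0"
  by (simp add: poly_sc_def)

lemma poly_sc_const [simp]: "poly_sc [:w:] t = w"
  by (simp add: poly_sc_def)

lemma poly_sc_add: "poly_sc (p + q) t = poly_sc p t + poly_sc q t"
proof -
  define N where "N = max (degree p) (degree q)"
  have "degree p \<le> N" "degree q \<le> N" "degree (p + q) \<le> N"
    by (simp_all add: N_def degree_add_le)
  then show ?thesis by (simp add: poly_sc_eq_sum sum.distrib scale_right_distrib)
qed

lemma poly_sc_diff: "poly_sc (p - q) t = poly_sc p t - poly_sc q t"
proof -
  define N where "N = max (degree p) (degree q)"
  have "degree p \<le> N" "degree q \<le> N" "degree (p - q) \<le> N"
    by (simp_all add: N_def degree_diff_le)
  then show ?thesis by (simp add: poly_sc_eq_sum sum_subtractf scale_right_diff_distrib)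
qed

lemma poly_sc_sum: "poly_sc (\<Sum>i\<in>A. P i) t = (\<Sum>i\<in>A. poly_sc (P i) t)"
  by (induct A rule: infinite_finite_induct) (simp_all add: poly_sc_add)

lemma poly_sc_map_poly:
  assumes "additive f" and "\<And>c u. f (sc c u) = sc c (f u)"
  shows "poly_sc (map_poly f p) t = f (poly_sc p t)"
proof -
  have "f 0 = 0" by (rule additive.zero [OF assms(1)])
  then show ?thesis
    using map_poly_degree_leq [of f p]
    by (simp add: poly_sc_eq_sum [of _ "degree p"] coeff_map_poly additive.sum [OF assms(1)]
        assms(2))
qed

lemma poly_sc_pCons_0: "poly_sc (pCons 0 p) t = sc t (poly_sc p t)"
proof -
  have "poly_sc (pCons 0 p) t = (\<Sum>j\<le>Suc (degree p). sc (t ^ j) (coeff (pCons 0 p) j))"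
    by (rule poly_sc_eq_sum) (rule degree_pCons_le)
  also have "\<dots> = sc t (poly_sc p t)"
    unfolding sum.atMost_Suc_shift by (simp add: poly_sc_def scale_sum_right)
  finally show ?thesis .
qed

lemma poly_sc_map_mult_left: "poly_sc (map_poly ((*) u) p) t = u * poly_sc p t"
  by (rule poly_sc_map_poly) (unfold_locales, simp_all add: distrib_left scale_mult_right)

lemma poly_sc_map_mult_right: "poly_sc (map_poly (\<lambda>w. w * u) p) t = poly_sc p t * u"
  by (rule poly_sc_map_poly) (unfold_locales, simp_all add: distrib_right scale_mult_left)

lemma poly_sc_zmult_left: "poly_sc (zmult_left y q) t = (y - sc t (y * y)) * poly_sc q t"
  by (simp add: zmult_left_def poly_sc_diff poly_sc_pCons_0 poly_sc_map_mult_left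
      scale_mult_left left_diff_distrib mult.assoc)

lemma poly_sc_zmult_right: "poly_sc (zmult_right y q) t = poly_sc q t * (y - sc t (y * y))"
  by (simp add: zmult_right_def poly_sc_diff poly_sc_pCons_0 poly_sc_map_mult_right
      scale_mult_right right_diff_distrib mult.assoc)

lemma poly_sc_zmult_left_iter:
  "poly_sc ((zmult_left y ^^ i) q) t = lpow (y - sc t (y * y)) i (poly_sc q t)"
  by (induct i) (simp_all add: poly_sc_zmult_left lpow_Suc)

lemma poly_sc_zmult_right_iter:
  "poly_sc ((zmult_right y ^^ j) q) t = rpow (poly_sc q t) (y - sc t (y * y)) j"
  by (induct j) (simp_all add: poly_sc_zmult_right rpow_Suc)

lemma poly_sc_map_scale: "poly_sc (map_poly (sc c) p) t = sc c (poly_sc p t)"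
  by (rule poly_sc_map_poly) (unfold_locales, simp_all add: scale_right_distrib mult.commute)

lemma reflect_eval_right_map_scale:
  "reflect_eval_right y N (map_poly (sc c) q) = sc c (reflect_eval_right y N q)"
  by (simp add: reflect_eval_right_def coeff_map_poly rpow_scale scale_sum_right)

lemma reflect_eval_left_map_scale:
  "reflect_eval_left y N (map_poly (sc c) q) = sc c (reflect_eval_left y N q)"
  by (simp add: reflect_eval_left_def coeff_map_poly lpow_scale scale_sum_right)

definition alpha :: "(nat \<Rightarrow> 'k) \<Rightarrow> nat \<Rightarrow> 'r \<Rightarrow> 'r \<Rightarrow> 'r" where
  "alpha a n x y = (\<Sum>i\<le>n. sc (a i) (lpow y i (rpow x y (n - i))))"

definition alpha_poly :: "(nat \<Rightarrow> 'k) \<Rightarrow> nat \<Rightarrow> 'r \<Rightarrow> 'r \<Rightarrow> 'r poly" where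
  "alpha_poly a n x y =
    (\<Sum>i\<le>n. map_poly (sc (a i)) ((zmult_left y ^^ i) ((zmult_right y ^^ (n - i)) [:x:])))"

lemma poly_sc_alpha_poly: "poly_sc (alpha_poly a n x y) t = alpha a n x (y - sc t (y * y))"
  by (simp add: alpha_poly_def alpha_def poly_sc_sum poly_sc_map_scale
      poly_sc_zmult_left_iter poly_sc_zmult_right_iter)

lemma reflect_eval_right_alpha_poly:
  "reflect_eval_right y n (alpha_poly a n x y) = sc (a n) (lpow y n (eseq x y n))"
proof -
  have "sc (a i) (reflect_eval_right y n ((zmult_left y ^^ i) ((zmult_right y ^^ (n - i)) [:x:])))
      = (if i = n then sc (a n) (lpow y n (eseq x y n)) else 0)" if "i \<le> n" for i
  proof (cases "i = n")
    case True
    then show ?thesis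
      using reflect_eval_right_zmult_left_iter [of "[:x:]" 0 y n]
      by (simp add: reflect_eval_right_def)
  next
    case False
    define d where "d = n - Suc i"
    have n: "n - i = Suc d" "n = i + Suc d"
      using that False by (simp_all add: d_def)
    have "degree ((zmult_right y ^^ d) [:x:]) \<le> d"
      using degree_zmult_right_iter_le [where y = y and i = d and q = "[:x:]"] by simp
    then have "reflect_eval_right y (Suc d) ((zmult_right y ^^ Suc d) [:x:]) = 0"
      by (simp add: reflect_eval_right_zmult_right)
    moreover have "degree ((zmult_right y ^^ Suc d) [:x:]) \<le> Suc d"
      using degree_zmult_right_iter_le [where y = y and i = "Suc d" and q = "[:x:]"] by simp
    ultimately have
      "reflect_eval_right y (i + Suc d) ((zmult_left y ^^ i) ((zmult_right y ^^ Suc d) [:x:])) = 0"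
      using reflect_eval_right_zmult_left_iter [of "(zmult_right y ^^ Suc d) [:x:]" "Suc d" y i]
      by simp
    then show ?thesis
      using False by (simp only: n) simp
  qed
  then show ?thesis
    unfolding alpha_poly_def reflect_eval_right_sum reflect_eval_right_map_scale
    by simp
qed

lemma reflect_eval_left_alpha_poly:
  "reflect_eval_left y n (alpha_poly a n x y) = sc (a 0) (rpow (eseq x (- y) n) y n)"
proof -
  have "sc (a i) (reflect_eval_left y n ((zmult_left y ^^ i) ((zmult_right y ^^ (n - i)) [:x:])))
      = (if i = 0 then sc (a 0) (rpow (eseq x (- y) n) y n) else 0)" if "i \<le> n" for i
  proof (cases i)
    case 0
    then show ?thesis
      using reflect_eval_left_zmult_right_iter [of "[:x:]" 0 y n]
      by (simp add: reflect_eval_left_def)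
  next
    case (Suc i')
    define N where "N = i' + (n - i)"
    have n: "n = Suc N" using that Suc by (simp add: N_def)
    have "degree ((zmult_left y ^^ i') ((zmult_right y ^^ (n - i)) [:x:])) \<le> N"
      using degree_zmult_left_iter_le
          [where y = y and i = i' and q = "(zmult_right y ^^ (n - i)) [:x:]"]
        degree_zmult_right_iter_le [where y = y and i = "n - i" and q = "[:x:]"]
      by (simp add: N_def)
    then have
      "reflect_eval_left y (Suc N) ((zmult_left y ^^ i) ((zmult_right y ^^ (n - i)) [:x:])) = 0"
      using Suc by (simp add: reflect_eval_left_zmult_left)
    then show ?thesis using Suc by (simp add: n [symmetric])
  qed
  then show ?thesis
    unfolding alpha_poly_def reflect_eval_left_sum reflect_eval_left_map_scale
    by simp
qed

end

lemma ex_power_ne_power_Suc: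
  assumes "infinite (UNIV :: 'a::idom set)"
  shows "\<exists>c::'a. \<forall>i\<le>d. c ^ i \<noteq> c ^ Suc d"
proof -
  have "finite {c::'a. poly (monom 1 (Suc d) - monom 1 i) c = 0}" if "i \<le> d" for i
  proof (rule poly_roots_finite)
    have "coeff (monom (1::'a) (Suc d) - monom 1 i) (Suc d) = 1"
      using that by simp
    then show "monom (1::'a) (Suc d) - monom 1 i \<noteq> 0"
      by (metis coeff_0 zero_neq_one)
  qed
  then have "finite (\<Union>i\<le>d. {c::'a. poly (monom 1 (Suc d) - monom 1 i) c = 0})"
    by blast
  then obtain c where "c \<notin> (\<Union>i\<le>d. {c::'a. poly (monom 1 (Suc d) - monom 1 i) c = 0})"
    using ex_new_if_finite [OF assms] by blast
  then show ?thesis by (intro exI [of _ c]) (auto simp: poly_monom, metis atMost_iff)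
qed

locale torsion_free_algebra = scalar_algebra sc for sc :: "'k::idom \<Rightarrow> 'r::ring \<Rightarrow> 'r" +
  assumes torsion_free: "torsion_free sc"
    and infinite_scalars: "infinite (UNIV :: 'k set)"
begin

lemma scale_eq_0_iff: "sc c w = 0 \<longleftrightarrow> c = 0 \<or> w = 0"
  using torsion_free unfolding torsion_free_def by auto

lemma power_sum_coeffs_eq_0:
  assumes "\<And>t. (\<Sum>j\<le>d. sc (t ^ j) (v j)) = 0" and "j \<le> d"
  shows "v j = 0"
  using assms
proof (induct d arbitrary: v j)
  case 0
  then show ?case by simp
next
  case (Suc d)
  \<comment> \<open>Comparing the identity at c t with c^(d+1) times the identity at t removes v (Suc d).\<close>
  obtain c :: 'k where c: "\<forall>i\<le>d. c ^ i \<noteq> c ^ Suc d"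
    using ex_power_ne_power_Suc [OF infinite_scalars] by blast
  have "(\<Sum>i\<le>d. sc (t ^ i) (sc (c ^ i - c ^ Suc d) (v i))) = 0" for t
  proof -
    have "(\<Sum>i\<le>d. sc (t ^ i) (sc (c ^ i - c ^ Suc d) (v i)))
        = (\<Sum>i\<le>Suc d. sc (t ^ i) (sc (c ^ i - c ^ Suc d) (v i)))"
      by simp
    also have "\<dots> = (\<Sum>i\<le>Suc d. sc ((c * t) ^ i) (v i))
        - sc (c ^ Suc d) (\<Sum>i\<le>Suc d. sc (t ^ i) (v i))"
      unfolding scale_sum_right sum_subtractf [symmetric]
      by (rule sum.cong)
        (simp_all add: power_mult_distrib scale_left_diff_distrib scale_right_diff_distrib
          mult.commute)
    finally show ?thesis using Suc.prems(1) by simp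
  qed
  then have "sc (c ^ i - c ^ Suc d) (v i) = 0" if "i \<le> d" for i
    by (rule Suc.hyps [where v = "\<lambda>i. sc (c ^ i - c ^ Suc d) (v i)"]) (rule that)
  then have low: "v i = 0" if "i \<le> d" for i
    using c that by (simp add: scale_eq_0_iff)
  have "v (Suc d) = (\<Sum>i\<le>Suc d. sc (1 ^ i) (v i))"
    using low by simp
  also have "\<dots> = 0" by (rule Suc.prems(1))
  finally show ?case
    using low Suc.prems(2) by (metis le_Suc_eq)
qed

lemma poly_sc_all_0_imp_0:
  assumes "\<And>t. poly_sc p t = 0"
  shows "p = 0"
proof (rule poly_eqI)
  fix j
  show "coeff p j = coeff 0 j"
  proof (cases "j \<le> degree p")
    case True
    then show ?thesis
      using power_sum_coeffs_eq_0 [where d = "degree p" and v = "coeff p"] assms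
      by (simp add: poly_sc_def)
  qed (simp add: coeff_eq_0)
qed

lemma alpha_poly_coeff_vanishing:
  assumes "\<And>x y. lpow y m (rpow (alpha a n x y) y k) = 0"
  shows "lpow y m (rpow (coeff (alpha_poly a n x y) j) y k) = 0"
proof -
  define Q where "Q = (zmult_right y ^^ k) (alpha_poly a n x y)"
  have "poly_sc ((zmult_left y ^^ m) Q) t = 0" for t
    using assms [where x = x and y = "y - sc t (y * y)"]
    by (simp add: Q_def poly_sc_zmult_left_iter poly_sc_zmult_right_iter poly_sc_alpha_poly)
  then have "(zmult_left y ^^ m) Q = 0"
    by (rule poly_sc_all_0_imp_0)
  then have "lpow y m (coeff Q i) = 0" for i
    using zmult_left_iter_peel [of "\<lambda>u. u" y m Q i] by (simp add: additive_def)
  then show ?thesis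
    using zmult_right_iter_peel [of "lpow y m" y k "alpha_poly a n x y" j]
    by (simp add: Q_def additive_def lpow_add lpow_mult)
qed

lemma eseq_vanishing_if_last_coeff_ne_0:
  fixes x y :: 'r
  assumes "\<And>x y. lpow y m (rpow (alpha a n x y) y k) = 0" and "a n \<noteq> 0"
  shows "lpow y (m + n) (rpow (eseq x y n) y k) = 0"
proof -
  have "sc (a n) (lpow y (m + n) (rpow (eseq x y n) y k))
      = lpow y m (rpow (reflect_eval_right y n (alpha_poly a n x y)) y k)"
    by (simp add: reflect_eval_right_alpha_poly lpow_scale rpow_scale lpow_lpow lpow_rpow)
  also have "\<dots> = 0"
    by (rule reflect_eval_right_vanishing) (rule alpha_poly_coeff_vanishing [OF assms(1)])
  finally show ?thesis using assms(2) by (simp add: scale_eq_0_iff)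
qed

lemma eseq_vanishing_if_first_coeff_ne_0:
  fixes x y :: 'r
  assumes "\<And>x y. lpow y m (rpow (alpha a n x y) y k) = 0" and "a 0 \<noteq> 0"
  shows "lpow y m (rpow (eseq x y n) y (n + k)) = 0"
proof -
  have "sc (a 0 * (- 1) ^ n) (lpow y m (rpow (eseq x y n) y (n + k)))
      = lpow y m (rpow (reflect_eval_left y n (alpha_poly a n x y)) y k)"
    by (simp add: reflect_eval_left_alpha_poly eseq_uminus lpow_scale rpow_scale rpow_rpow)
  also have "\<dots> = 0"
    by (rule reflect_eval_left_vanishing) (rule alpha_poly_coeff_vanishing [OF assms(1)])
  finally show ?thesis using assms(2) by (simp add: scale_eq_0_iff)
qed

end

theorem lemma2p3:
  fixes sc :: "'k::idom \<Rightarrow> 'r::ring \<Rightarrow> 'r"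
    and a :: "nat \<Rightarrow> 'k"
    and m k n :: nat
  assumes "infinite (UNIV :: 'k set)"
    and "algebra_over sc"
    and "torsion_free sc"
    and hyp: "\<forall>x y :: 'r. lpow y m (rpow (\<Sum>i\<le>n. sc (a i) (lpow y i (rpow x y (n - i)))) y k) = 0"
  shows "(a n \<noteq> 0 \<longrightarrow> (\<forall>x y :: 'r. lpow y (m + n) (rpow (eseq x y n) y k) = 0))
       \<and> (a 0 \<noteq> 0 \<longrightarrow> (\<forall>x y :: 'r. lpow y m (rpow (eseq x y n) y (n + k)) = 0))
       \<and> (a 0 \<noteq> 0 \<and> a n \<noteq> 0 \<longrightarrow> (\<forall>x y :: 'r. lpow y m (rpow (eseq x y (3 * n - 1)) y k) = 0))"
proof -
  interpret torsion_free_algebra sc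
    by unfold_locales (rule assms)+
  have alpha_hyp: "lpow y m (rpow (alpha a n x y) y k) = 0" for x y
    using hyp by (simp add: alpha_def)
  have last: "lpow y (m + n) (rpow (eseq x y n) y k) = 0" if "a n \<noteq> 0" for x y :: 'r
    by (rule eseq_vanishing_if_last_coeff_ne_0 [OF alpha_hyp that])
  have first: "lpow y m (rpow (eseq x y n) y (n + k)) = 0" if "a 0 \<noteq> 0" for x y :: 'r
    by (rule eseq_vanishing_if_first_coeff_ne_0 [OF alpha_hyp that])
  have "lpow y m (rpow (eseq x y (3 * n - 1)) y k) = 0" if "a 0 \<noteq> 0" "a n \<noteq> 0" for x y :: 'r
  proof -
    have "3 * n - 1 = n + (2 * n - 1)" by simp
    then have "eseq x y (3 * n - 1) = eseq (eseq x y n) y (2 * n - 1)"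
      by (simp add: eseq_eseq)
    then show ?thesis
      using eseq_vanishing_from_ends [OF last [OF that(2)] first [OF that(1)]] by simp
  qed
  with last first show ?thesis by blast
qed

end
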